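(* Let $K\ge 2$ and $L\ge 2$ be integers and set $$s^*=\frac{L\,(K-1)^{L}}{K^{L+1}-(K-1)^{L-1}\big((K-1)K+L\big)}.$$ Consider the $K$-proposer game in which proposer $i$ chooses an offer $s_i\in[0,1]$, and, for every offer profile $(s_1,\dots,s_K)$ that is not identically zero, the $L$ responders all play the unique evolutionarily stable strategy $(p_1,\dots,p_K)$ of the responder game induced by these offers, so that proposer $i$'s expected payoff is $\Pi_{P,i}=(1-s_i)\big(1-(1-p_i)^L\big)$. Then the profile in which every proposer offers $s_i=s^*$ is a subgame-perfect Nash equilibrium, and apart from the profile in which all offers are zero, it is the only subgame-perfect Nash equilibrium. In this equilibrium each responder selects each proposer with probability $1/K$.
   Context: Multi-Proposer-Multi-Responder Ultimatum Game with $K$ proposers and $L$ responders: each proposer $i$ simultaneously offers a share $s_i\in[0,1]$ of a reward of size one to the responders; each responder, knowing all offers and independently of the others, selects one proposer according to a mixed strategy $(p_1,\dots,p_K)$; a proposer selected by at least one responder receives $1-s_i$, otherwise $0$; among the $N_i$ responders who selected proposer $i$, exactly one chosen uniformly at random receives $s_i$, the others receive $0$. Given offers not all zero, the induced symmetric $L$-player responder game has a unique evolutionarily stable strategy (responders are drawn from an infinite population; $p$ is evolutionarily stable if for every $q\ne p$ and all sufficiently small $\varepsilon>0$, a focal player using $p$ earns strictly more than one using $q$ when the other $L-1$ players independently play $(1-\varepsilon)p+\varepsilon q$). Subgame-perfect Nash equilibrium here means an offer profile from which no proposer can strictly increase its expected payoff by unilaterally changing its offer, responders' behaviour in each subgame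 being this evolutionarily stable strategy. *)

theory Defs
  imports Complex_Main
begin

text \<open>Proposers are indexed by 0,...,K-1. Offer profiles and mixed strategies are
  functions nat => real that vanish outside {..<K}.\<close>

definition offers :: "nat \<Rightarrow> (nat \<Rightarrow> real) set" where
  "offers K = {s. (\<forall>i<K. 0 \<le> s i \<and> s i \<le> 1) \<and> (\<forall>i\<ge>K. s i = 0)}"

definition simplex :: "nat \<Rightarrow> (nat \<Rightarrow> real) set" where
  "simplex K = {p. (\<forall>i. 0 \<le> p i) \<and> (\<forall>i\<ge>K. p i = 0) \<and> (\<Sum>i<K. p i) = 1}"

text \<open>Expected payoff of a focal responder who selects proposer j, when the other
  L-1 responders independently select proposer j with probability x: the reward s_j
  is given to one of the 1+M selecting responders uniformly, M ~ Binomial(L-1,x).\<close>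

definition win_prob :: "nat \<Rightarrow> real \<Rightarrow> real" where
  "win_prob L x = (\<Sum>m\<le>L-1. real ((L-1) choose m) * x ^ m * (1 - x) ^ (L - 1 - m) / real (m + 1))"

definition resp_payoff :: "nat \<Rightarrow> nat \<Rightarrow> (nat \<Rightarrow> real) \<Rightarrow> (nat \<Rightarrow> real) \<Rightarrow> (nat \<Rightarrow> real) \<Rightarrow> real" where
  "resp_payoff K L s p q = (\<Sum>j<K. p j * s j * win_prob L (q j))"

definition ESS :: "nat \<Rightarrow> nat \<Rightarrow> (nat \<Rightarrow> real) \<Rightarrow> (nat \<Rightarrow> real) \<Rightarrow> bool" where
  "ESS K L s p \<longleftrightarrow> p \<in> simplex K \<and>
     (\<forall>q \<in> simplex K. q \<noteq> p \<longrightarrow>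
        (\<exists>e0>0. \<forall>e. 0 < e \<and> e < e0 \<longrightarrow>
           resp_payoff K L s q (\<lambda>i. (1 - e) * p i + e * q i)
             < resp_payoff K L s p (\<lambda>i. (1 - e) * p i + e * q i)))"

definition resp_strategy :: "nat \<Rightarrow> nat \<Rightarrow> (nat \<Rightarrow> real) \<Rightarrow> (nat \<Rightarrow> real)" where
  "resp_strategy K L s = (THE p. ESS K L s p)"

definition prop_payoff :: "nat \<Rightarrow> nat \<Rightarrow> (nat \<Rightarrow> real) \<Rightarrow> nat \<Rightarrow> real" where
  "prop_payoff K L s i = (1 - s i) * (1 - (1 - resp_strategy K L s i) ^ L)"

definition SPNE :: "nat \<Rightarrow> nat \<Rightarrow> (nat \<Rightarrow> real) \<Rightarrow> bool" where
  "SPNE K L s \<longleftrightarrow> s \<in> offers K \<and>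
     (\<forall>i<K. \<forall>x. 0 \<le> x \<and> x \<le> 1 \<longrightarrow> prop_payoff K L (s(i := x)) i \<le> prop_payoff K L s i)"

definition sstar :: "nat \<Rightarrow> nat \<Rightarrow> real" where
  "sstar K L = real L * (real K - 1) ^ L /
     (real K ^ (L + 1) - (real K - 1) ^ (L - 1) * ((real K - 1) * real K + real L))"

end

theory Submission
  imports Defs "HOL-Analysis.Derivative"
begin

(* Let W = win_prob L; it equals (1 - (1 - x)^L) / (L x) and is strictly decreasing on [0, 1].
   The ESS of the responder game is its unique Nash equilibrium: every proposer k that is
   chosen with positive probability p_k gives the same value c = s_k W(p_k), and no proposer
   gives more.

   When proposer i deviates
   and attracts share t, the other proposers share 1 - t equally, and the deviator's payoff is
   at most 1 - (1 - t)^L - s* L t W((1 - t)/(K - 1)).  This bound is concave in t, and the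
   formula for s* is exactly the condition that its derivative vanishes at t = 1/K.

   Conversely, take an SPNE with a nonzero offer.  Every proposer is chosen with positive
   probability and offers less than 1.  Proposer i can choose its offer so that the
   equilibrium value scales from c to rho c; the other shares then become W^-1(rho W(p_j)).
   Fermat's rule at rho = 1 gives a first-order condition for each proposer.  Because
   p W(p) / -W'(p) increases with p, comparing the conditions of two proposers forces all
   shares to be 1/K, and the condition then yields the offer s*. *)

section \<open>Winning probability\<close>

lemma win_prob_geometric:
  assumes "L \<ge> 1"
  shows "win_prob L x = (\<Sum>k<L. (1 - x) ^ k) / real L"
proof -
  obtain n where L: "L = Suc n" using assms by (cases L) auto
  show ?thesis
  proof (cases "x = 0")
    case True
    have "win_prob L 0 = (\<Sum>m\<le>n. if m = 0 then 1 else 0)"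
      unfolding win_prob_def L by (intro sum.cong) auto
    with True show ?thesis by (simp add: L)
  next
    case False
    (* C(n, m) / (m + 1) = C(n + 1, m + 1) / (n + 1) turns L x W(x) into the binomial
       expansion of 1 - (1 - x)^L *)
    have binom_term: "x * real L * (real (n choose m) * x ^ m * (1 - x) ^ (n - m) / real (m + 1))
        = real (Suc n choose Suc m) * x ^ Suc m * (1 - x) ^ (Suc n - Suc m)" for m
    proof -
      have c: "real (Suc n) * real (n choose m) = real (Suc n choose Suc m) * real (Suc m)"
        using Suc_times_binomial_eq[of n m] by (metis of_nat_mult)
      have "x * real L * (real (n choose m) * x ^ m * (1 - x) ^ (n - m) / real (m + 1))
          = (real (Suc n) * real (n choose m)) * x ^ Suc m * (1 - x) ^ (n - m) / real (Suc m)"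
        by (simp only: L power_Suc Suc_eq_plus1[symmetric]) (simp add: algebra_simps)
      then show ?thesis unfolding c by simp
    qed
    have "x * real L * win_prob L x
        = (\<Sum>m\<le>n. real (Suc n choose Suc m) * x ^ Suc m * (1 - x) ^ (Suc n - Suc m))"
      unfolding win_prob_def sum_distrib_left using binom_term by (simp add: L)
    also have "\<dots> = (x + (1 - x)) ^ Suc n - (1 - x) ^ Suc n"
      unfolding binomial_ring[of x "1 - x" "Suc n"] sum.atMost_Suc_shift by simp
    also have "\<dots> = x * (\<Sum>k<L. (1 - x) ^ k)"
      using one_diff_power_eq[of "1 - x" "Suc n"] by (simp add: L)
    finally have "real L * win_prob L x = (\<Sum>k<L. (1 - x) ^ k)"
      using False by (simp add: mult.assoc)
    moreover have "real L > 0" using assms by simp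
    ultimately show ?thesis by (simp add: field_simps)
  qed
qed

lemma win_prob_closed_form:
  assumes "L \<ge> 1"
  shows "real L * x * win_prob L x = 1 - (1 - x) ^ L"
  using one_diff_power_eq[of "1 - x" L] assms by (simp add: win_prob_geometric)

lemma win_prob_0: "L \<ge> 1 \<Longrightarrow> win_prob L 0 = 1"
  by (simp add: win_prob_geometric)

lemma win_prob_1: "L \<ge> 1 \<Longrightarrow> win_prob L 1 = 1 / real L"
  using win_prob_closed_form[of L 1] by (simp add: field_simps zero_power)

lemma win_prob_strict_antimono:
  assumes "L \<ge> 2" "0 \<le> x" "x < y" "y \<le> 1"
  shows "win_prob L y < win_prob L x"
proof -
  have "(\<Sum>k<L. (1 - y) ^ k) < (\<Sum>k<L. (1 - x) ^ k)"
  proof (rule sum_strict_mono_ex1)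
    show "\<forall>k\<in>{..<L}. (1 - y) ^ k \<le> (1 - x) ^ k"
      using assms by (auto intro!: power_mono)
    show "\<exists>k\<in>{..<L}. (1 - y) ^ k < (1 - x) ^ k"
      using assms by (intro bexI[of _ 1]) auto
  qed simp
  then show ?thesis using assms by (simp add: win_prob_geometric divide_strict_right_mono)
qed

lemma win_prob_antimono:
  "L \<ge> 2 \<Longrightarrow> 0 \<le> x \<Longrightarrow> x \<le> y \<Longrightarrow> y \<le> 1 \<Longrightarrow> win_prob L y \<le> win_prob L x"
  using win_prob_strict_antimono[of L x y] by (cases "x = y") auto

lemma win_prob_inj:
  assumes "L \<ge> 2" "x \<in> {0..1}" "y \<in> {0..1}" "win_prob L x = win_prob L y"
  shows "x = y"
  using win_prob_strict_antimono[of L x y] win_prob_strict_antimono[of L y x] assms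
  by (cases x y rule: linorder_cases) auto

lemma win_prob_ge:
  assumes "L \<ge> 1" "x \<le> 1"
  shows "1 / real L \<le> win_prob L x"
proof -
  have "(1 - x) ^ 0 \<le> (\<Sum>k<L. (1 - x) ^ k)"
    using assms by (intro member_le_sum) auto
  then show ?thesis using assms by (simp add: win_prob_geometric divide_right_mono)
qed

lemma win_prob_pos: "L \<ge> 1 \<Longrightarrow> x \<le> 1 \<Longrightarrow> 0 < win_prob L x"
  by (rule less_le_trans[OF _ win_prob_ge]) auto

lemma win_prob_less_1: "L \<ge> 2 \<Longrightarrow> 0 < x \<Longrightarrow> x \<le> 1 \<Longrightarrow> win_prob L x < 1"
  using win_prob_strict_antimono[of L 0 x] win_prob_0[of L] by simp

lemma win_prob_greater: "L \<ge> 2 \<Longrightarrow> 0 \<le> x \<Longrightarrow> x < 1 \<Longrightarrow> 1 / real L < win_prob L x"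
  using win_prob_strict_antimono[of L x 1] win_prob_1[of L] by simp

lemma isCont_win_prob: "isCont (win_prob L) x"
  unfolding win_prob_def by (intro continuous_intros) (simp only: of_nat_eq_0_iff)

lemma DERIV_power_one_minus: "DERIV (\<lambda>x. (1 - x) ^ k) x :> - (real k * (1 - x) ^ (k - 1))"
  by (rule derivative_eq_intros refl | simp)+

definition win_prob_deriv :: "nat \<Rightarrow> real \<Rightarrow> real" where
  "win_prob_deriv L x = - (\<Sum>k<L. real k * (1 - x) ^ (k - 1)) / real L"

lemma DERIV_win_prob:
  assumes "L \<ge> 1"
  shows "DERIV (win_prob L) x :> win_prob_deriv L x"
proof -
  have "DERIV (\<lambda>x. (\<Sum>k<L. (1 - x) ^ k) * inverse (real L)) x
      :> (\<Sum>k<L. - (real k * (1 - x) ^ (k - 1))) * inverse (real L)"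
    by (intro DERIV_cmult_right DERIV_sum DERIV_power_one_minus)
  moreover have "win_prob L = (\<lambda>x. (\<Sum>k<L. (1 - x) ^ k) * inverse (real L))"
    using assms by (simp add: fun_eq_iff win_prob_geometric divide_inverse)
  ultimately show ?thesis
    by (simp add: win_prob_deriv_def sum_negf divide_inverse)
qed

lemma win_prob_deriv_nonpos: "x \<le> 1 \<Longrightarrow> win_prob_deriv L x \<le> 0"
  unfolding win_prob_deriv_def by (auto intro!: divide_nonneg_nonneg sum_nonneg)

lemma win_prob_deriv_neg: "L \<ge> 2 \<Longrightarrow> x < 1 \<Longrightarrow> win_prob_deriv L x < 0"
  unfolding win_prob_deriv_def
  by (auto intro!: divide_pos_pos sum_pos2[of _ 1] simp: neg_less_0_iff_less)

lemma win_prob_deriv_mono: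
  "0 \<le> x \<Longrightarrow> x \<le> y \<Longrightarrow> y \<le> 1 \<Longrightarrow> win_prob_deriv L x \<le> win_prob_deriv L y"
  unfolding win_prob_deriv_def
  by (auto intro!: divide_right_mono sum_mono mult_left_mono power_mono)

lemma win_prob_deriv_eq:
  assumes "L \<ge> 1"
  shows "x * win_prob_deriv L x = (1 - x) ^ (L - 1) - win_prob L x"
proof -
  have "(1 - y) * (\<Sum>k<n. real k * y ^ (k - 1)) = (\<Sum>k<n. y ^ k) - real n * y ^ (n - 1)"
    for n and y :: real
  proof (induction n)
    case (Suc n)
    have shift: "real n * (y * y ^ (n - 1)) = real n * y ^ n" by (cases n) auto
    have "(1 - y) * (\<Sum>k<Suc n. real k * y ^ (k - 1))
        = (1 - y) * (\<Sum>k<n. real k * y ^ (k - 1)) + real n * y ^ (n - 1) - real n * (y * y ^ (n - 1))"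
      by (simp add: algebra_simps)
    also have "\<dots> = (\<Sum>k<Suc n. y ^ k) - real (Suc n) * y ^ (Suc n - 1)"
      unfolding Suc.IH shift by (simp add: algebra_simps)
    finally show ?case .
  qed simp
  from this[where n = L and y = "1 - x"] assms show ?thesis
    by (simp add: win_prob_deriv_def win_prob_geometric field_simps)
qed

definition win_prob_ratio :: "nat \<Rightarrow> real \<Rightarrow> real" where
  "win_prob_ratio L x = - (win_prob L x / win_prob_deriv L x)"

lemma win_prob_ratio_pos: "L \<ge> 2 \<Longrightarrow> x < 1 \<Longrightarrow> 0 < win_prob_ratio L x"
  using win_prob_pos[of L x] win_prob_deriv_neg[of L x]
  by (simp add: win_prob_ratio_def divide_pos_neg)

lemma win_prob_ratio_mono:
  assumes L: "L \<ge> 2" and "0 \<le> x" "x \<le> y" "y < 1"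
  shows "x * win_prob_ratio L x \<le> y * win_prob_ratio L y"
proof -
  have "x * win_prob L x / - win_prob_deriv L x \<le> y * win_prob L y / - win_prob_deriv L y"
  proof (rule frac_le)
    have "(1 - y) ^ L \<le> (1 - x) ^ L"
      using assms by (intro power_mono) auto
    then have "real L * (x * win_prob L x) \<le> real L * (y * win_prob L y)"
      using win_prob_closed_form[of L x] win_prob_closed_form[of L y] L by (simp add: mult.assoc)
    then show "x * win_prob L x \<le> y * win_prob L y" using L by simp
    show "0 \<le> y * win_prob L y"
      using assms win_prob_pos[of L y] by simp
    show "0 < - win_prob_deriv L y"
      using win_prob_deriv_neg[OF L] assms by simp
    show "- win_prob_deriv L y \<le> - win_prob_deriv L x"
      using win_prob_deriv_mono[of x y L] assms by simp
  qed
  then show ?thesis by (simp add: win_prob_ratio_def)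
qed

definition win_prob_inv :: "nat \<Rightarrow> real \<Rightarrow> real" where
  "win_prob_inv L y = (THE x. 0 \<le> x \<and> x \<le> 1 \<and> win_prob L x = y)"

lemma win_prob_inv_win_prob:
  assumes "L \<ge> 2" "0 \<le> x" "x \<le> 1"
  shows "win_prob_inv L (win_prob L x) = x"
  unfolding win_prob_inv_def
  by (rule the_equality) (use assms win_prob_inj[of L] in auto)

lemma win_prob_win_prob_inv:
  assumes "L \<ge> 2" "1 / real L \<le> y" "y \<le> 1"
  shows "0 \<le> win_prob_inv L y" "win_prob_inv L y \<le> 1" "win_prob L (win_prob_inv L y) = y"
proof -
  obtain x where x: "0 \<le> x" "x \<le> 1" "win_prob L x = y"
    using IVT2[of "win_prob L" 1 y 0] assms win_prob_0[of L] win_prob_1[of L] isCont_win_prob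
    by auto
  then show "0 \<le> win_prob_inv L y" "win_prob_inv L y \<le> 1" "win_prob L (win_prob_inv L y) = y"
    using win_prob_inv_win_prob[OF assms(1) x(1,2)] by auto
qed

lemma DERIV_win_prob_inv:
  assumes L: "L \<ge> 2" and x: "0 < x" "x < 1"
  shows "DERIV (win_prob_inv L) (win_prob L x) :> 1 / win_prob_deriv L x"
  unfolding divide_inverse mult_1
proof (rule DERIV_inverse_function[where a = "1 / real L" and b = 1])
  show "DERIV (win_prob L) (win_prob_inv L (win_prob L x)) :> win_prob_deriv L x"
    using win_prob_inv_win_prob[OF L] x DERIV_win_prob[of L] L by simp
  show "win_prob_deriv L x \<noteq> 0"
    using win_prob_deriv_neg[OF L x(2)] by simp
  show "1 / real L < win_prob L x" "win_prob L x < 1"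
    using win_prob_greater[OF L] win_prob_less_1[OF L] x by auto
  show "win_prob L (win_prob_inv L y) = y" if "1 / real L < y" "y < 1" for y
    using win_prob_win_prob_inv[OF L] that by simp
  show "isCont (win_prob_inv L) (win_prob L x)"
    by (rule isCont_inverse_function2[where a = 0 and b = 1])
       (use x win_prob_inv_win_prob[OF L] isCont_win_prob in auto)
qed

section \<open>Nash equilibria of the responder game\<close>

lemma simplex_nonneg: "p \<in> simplex K \<Longrightarrow> 0 \<le> p k"
  by (simp add: simplex_def)

lemma simplex_sum: "p \<in> simplex K \<Longrightarrow> (\<Sum>k<K. p k) = 1"
  by (simp add: simplex_def)

lemma simplex_le_1:
  assumes "p \<in> simplex K"
  shows "p k \<le> 1"
proof (cases "k < K")
  case True
  then have "p k \<le> (\<Sum>i<K. p i)"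
    using assms by (intro member_le_sum) (auto simp: simplex_def)
  then show ?thesis using assms by (simp add: simplex_def)
qed (use assms in \<open>simp add: simplex_def\<close>)

lemma simplex_sum_others:
  "p \<in> simplex K \<Longrightarrow> i < K \<Longrightarrow> (\<Sum>j\<in>{..<K} - {i}. p j) = 1 - p i"
  using sum_diff1[of "{..<K}" p i] simplex_sum[of p K] by simp

lemma sum_two_le:
  fixes f :: "'a \<Rightarrow> 'b::ordered_comm_monoid_add"
  assumes "finite A" "j \<in> A" "l \<in> A" "j \<noteq> l" "\<And>x. x \<in> A \<Longrightarrow> 0 \<le> f x"
  shows "f j + f l \<le> sum f A"
proof -
  have "sum f {j, l} \<le> sum f A"
    using assms by (intro sum_mono2) auto
  then show ?thesis using assms(4) by simp
qed

lemma simplex_eqI: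
  assumes "p \<in> simplex K" "q \<in> simplex K" "\<And>k. k < K \<Longrightarrow> q k \<le> p k"
  shows "q = p"
proof
  fix k
  have "(\<Sum>k<K. p k - q k) = 0"
    using assms by (simp add: sum_subtractf simplex_def)
  then have "\<forall>k\<in>{..<K}. p k - q k = 0"
    using assms by (subst (asm) sum_nonneg_eq_0_iff) auto
  then show "q k = p k"
    using assms by (cases "k < K") (auto simp: simplex_def)
qed

lemma simplex_exists_ge_inverse:
  assumes "p \<in> simplex K" "1 \<le> K"
  shows "\<exists>j<K. 1 / real K \<le> p j"
proof (rule ccontr)
  assume "\<not> ?thesis"
  then have "(\<Sum>j<K. p j) < (\<Sum>j<K. 1 / real K)"
    using assms(2) by (intro sum_strict_mono) (auto simp: lessThan_empty_iff)
  then show False using assms by (simp add: simplex_sum)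
qed

lemma exists_other_index: "2 \<le> K \<Longrightarrow> \<exists>j<K. j \<noteq> (i::nat)"
  by (rule exI[of _ "if i = 0 then 1 else 0"]) auto

lemma offers_nonzero:
  assumes "s \<in> offers K" "s \<noteq> (\<lambda>_. 0)"
  obtains i where "i < K" "0 < s i"
proof -
  obtain i where i: "s i \<noteq> 0" using assms(2) by auto
  have "i < K"
  proof (rule ccontr)
    assume "\<not> i < K"
    then show False using i assms(1) by (simp add: offers_def)
  qed
  with i assms(1) show ?thesis
    using that[of i] by (auto simp: offers_def order_le_less)
qed

definition resp_nash :: "nat \<Rightarrow> nat \<Rightarrow> (nat \<Rightarrow> real) \<Rightarrow> (nat \<Rightarrow> real) \<Rightarrow> real \<Rightarrow> bool" where
  "resp_nash K L s p c \<longleftrightarrow> p \<in> simplex K \<and> (\<forall>k<K. s k * win_prob L (p k) \<le> c) \<and>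
     (\<forall>k<K. 0 < p k \<longrightarrow> s k * win_prob L (p k) = c)"

lemma ESS_pure_reply_le:
  assumes E: "ESS K L s p" and k: "k < K"
  shows "s k * win_prob L (p k) \<le> resp_payoff K L s p p"
proof -
  define q where "q = (\<lambda>j. if j = k then 1 else (0::real))"
  have q: "q \<in> simplex K"
    using k unfolding simplex_def q_def by auto
  have payoff_q: "resp_payoff K L s q r = s k * win_prob L (r k)" for r
  proof -
    have "resp_payoff K L s q r = (\<Sum>j<K. if j = k then s k * win_prob L (r k) else 0)"
      unfolding resp_payoff_def q_def by (intro sum.cong) auto
    also have "\<dots> = s k * win_prob L (r k)"
      using k by (subst sum.delta) auto
    finally show ?thesis .
  qed
  show ?thesis
  proof (cases "q = p")
    case True
    then show ?thesis using payoff_q by simp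
  next
    case False
    define mix where "mix = (\<lambda>e i. (1 - e) * p i + e * q i)"
    from E q False obtain e0 where "e0 > 0" and
      less: "\<And>e. 0 < e \<Longrightarrow> e < e0 \<Longrightarrow> resp_payoff K L s q (mix e) < resp_payoff K L s p (mix e)"
      unfolding ESS_def mix_def by blast
    have "((\<lambda>e. resp_payoff K L s p (mix e) - s k * win_prob L (mix e k)) \<longlongrightarrow>
        resp_payoff K L s p (mix 0) - s k * win_prob L (mix 0 k)) (at_right 0)"
      unfolding resp_payoff_def mix_def
      by (intro tendsto_intros isCont_tendsto_compose[OF isCont_win_prob])
    moreover have "eventually (\<lambda>e. 0 \<le> resp_payoff K L s p (mix e) - s k * win_prob L (mix e k))
        (at_right 0)"
      using eventually_at_right_real[OF \<open>e0 > 0\<close>] by eventually_elim (use less payoff_q in force)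
    ultimately have "0 \<le> resp_payoff K L s p (mix 0) - s k * win_prob L (mix 0 k)"
      by (rule tendsto_lowerbound) simp
    moreover have "mix 0 = p" by (simp add: mix_def fun_eq_iff)
    ultimately show ?thesis by simp
  qed
qed

lemma resp_nashI_best_reply:
  assumes p: "p \<in> simplex K"
    and le: "\<And>k. k < K \<Longrightarrow> s k * win_prob L (p k) \<le> resp_payoff K L s p p"
  shows "resp_nash K L s p (resp_payoff K L s p p)"
proof -
  define c where "c = resp_payoff K L s p p"
  have "(\<Sum>k<K. p k * (c - s k * win_prob L (p k)))
      = c * (\<Sum>k<K. p k) - (\<Sum>k<K. p k * s k * win_prob L (p k))"
    by (simp add: algebra_simps sum_subtractf sum_distrib_left)
  then have "(\<Sum>k<K. p k * (c - s k * win_prob L (p k))) = 0"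
    using p by (simp add: c_def resp_payoff_def simplex_def)
  moreover have "\<forall>k\<in>{..<K}. 0 \<le> p k * (c - s k * win_prob L (p k))"
    using le p by (auto simp: c_def simplex_def)
  ultimately have "\<forall>k\<in>{..<K}. p k * (c - s k * win_prob L (p k)) = 0"
    by (subst (asm) sum_nonneg_eq_0_iff) auto
  then have "s k * win_prob L (p k) = c" if "k < K" "0 < p k" for k
    using that by force
  then show ?thesis
    using p le unfolding resp_nash_def c_def[symmetric] by auto
qed

lemma ESS_imp_resp_nash: "ESS K L s p \<Longrightarrow> resp_nash K L s p (resp_payoff K L s p p)"
  by (intro resp_nashI_best_reply ESS_pure_reply_le) (auto simp: ESS_def)

lemma resp_nash_value_pos:
  assumes "L \<ge> 1" "s \<in> offers K" "s \<noteq> (\<lambda>_. 0)" "resp_nash K L s p c"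
  shows "0 < c"
proof -
  obtain i where i: "i < K" "0 < s i" using offers_nonzero[OF assms(2,3)] .
  have "p \<in> simplex K" using assms(4) by (simp add: resp_nash_def)
  then have "0 < s i * win_prob L (p i)"
    using i win_prob_pos[OF assms(1) simplex_le_1] by simp
  also have "\<dots> \<le> c" using assms i by (simp add: resp_nash_def)
  finally show ?thesis .
qed

lemma resp_nash_le_shares:
  assumes L: "L \<ge> 2" and s: "s \<in> offers K"
    and p: "resp_nash K L s p c" and q: "resp_nash K L s q d"
    and "c \<le> d" "0 < c" "k < K"
  shows "q k \<le> p k"
proof (rule ccontr)
  assume "\<not> q k \<le> p k"
  then have less: "p k < q k" by simp
  have "p \<in> simplex K" "q \<in> simplex K" using p q by (auto simp: resp_nash_def)
  then have "0 \<le> p k" "q k \<le> 1" by (auto simp: simplex_nonneg simplex_le_1)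
  with less have W_less: "win_prob L (q k) < win_prob L (p k)"
    using win_prob_strict_antimono[OF L] by blast
  have d: "s k * win_prob L (q k) = d" and c: "s k * win_prob L (p k) \<le> c"
    using p q \<open>k < K\<close> less \<open>0 \<le> p k\<close> by (auto simp: resp_nash_def)
  have "0 < s k"
    using s \<open>k < K\<close> d \<open>c \<le> d\<close> \<open>0 < c\<close> by (auto simp: offers_def order_le_less)
  then have "s k * win_prob L (q k) < s k * win_prob L (p k)"
    using W_less by simp
  then show False using c d \<open>c \<le> d\<close> by simp
qed

lemma resp_nash_unique:
  assumes L: "L \<ge> 2" and s: "s \<in> offers K" "s \<noteq> (\<lambda>_. 0)"
    and p: "resp_nash K L s p c" and q: "resp_nash K L s q d"
  shows "p = q"
proof -
  have simplices: "p \<in> simplex K" "q \<in> simplex K" using p q by (auto simp: resp_nash_def)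
  have "1 \<le> L" using L by simp
  then have "0 < c" "0 < d"
    using resp_nash_value_pos[OF _ s p] resp_nash_value_pos[OF _ s q] by auto
  show ?thesis
  proof (cases "c \<le> d")
    case True
    have "q = p"
      by (rule simplex_eqI[OF simplices]) (rule resp_nash_le_shares[OF L s(1) p q True \<open>0 < c\<close>])
    then show ?thesis by simp
  next
    case False
    show ?thesis
      by (rule simplex_eqI[OF simplices(2,1)])
         (use False in \<open>auto intro: resp_nash_le_shares[OF L s(1) q p _ \<open>0 < d\<close>]\<close>)
  qed
qed

lemma resp_nash_equal_offers:
  assumes L: "L \<ge> 2" and N: "resp_nash K L s p c" and "0 < \<sigma>"
    and j: "j < K" "s j = \<sigma>" and k: "k < K" "s k = \<sigma>"
  shows "p j = p k"
proof -
  have p: "p \<in> simplex K" using N by (simp add: resp_nash_def)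
  have zero: False if "p a = 0" "0 < p b" "a < K" "s a = \<sigma>" "b < K" "s b = \<sigma>" for a b
  proof -
    have "\<sigma> \<le> c" using N that win_prob_0[of L] L by (force simp: resp_nash_def)
    moreover have "c = \<sigma> * win_prob L (p b)" using N that by (auto simp: resp_nash_def)
    moreover have "win_prob L (p b) < 1"
      using win_prob_less_1[OF L] that simplex_le_1[OF p] by blast
    ultimately show False using \<open>0 < \<sigma>\<close> by (simp add: mult_less_cancel_left1)
  qed
  have "p j = 0 \<longleftrightarrow> p k = 0"
    using zero[of j k] zero[of k j] j k simplex_nonneg[of p K] p by (auto simp: order_le_less)
  then show ?thesis
  proof (cases "p j = 0")
    case False
    then have "0 < p j" "0 < p k"
      using \<open>p j = 0 \<longleftrightarrow> p k = 0\<close> simplex_nonneg[OF p] by (auto simp: order_le_less)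
    then have "\<sigma> * win_prob L (p j) = c" "\<sigma> * win_prob L (p k) = c"
      using N j k by (auto simp: resp_nash_def)
    then have "\<sigma> * win_prob L (p j) = \<sigma> * win_prob L (p k)" by simp
    then have "win_prob L (p j) = win_prob L (p k)"
      using \<open>0 < \<sigma>\<close> by simp
    then show ?thesis
      by (rule win_prob_inj[OF L, rotated 2]) (auto simp: simplex_nonneg[OF p] simplex_le_1[OF p])
  qed simp
qed

lemma resp_nash_others_share:
  assumes K: "K \<ge> 2" and L: "L \<ge> 2" and N: "resp_nash K L s p c" and i: "i < K"
    and \<sigma>: "0 < \<sigma>" and others: "\<And>k. k < K \<Longrightarrow> k \<noteq> i \<Longrightarrow> s k = \<sigma>"
    and k: "k < K" "k \<noteq> i"
  shows "p k = (1 - p i) / (real K - 1)"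
proof -
  have equal: "p j = p k" if "j \<in> {..<K} - {i}" for j
    by (rule resp_nash_equal_offers[OF L N \<sigma>]) (use that k others in auto)
  have "p \<in> simplex K" using N by (simp add: resp_nash_def)
  then have "1 - p i = (\<Sum>j\<in>{..<K} - {i}. p j)"
    using simplex_sum_others[of p K i] i by simp
  also have "\<dots> = (\<Sum>j\<in>{..<K} - {i}. p k)"
    by (intro sum.cong refl equal)
  also have "\<dots> = (real K - 1) * p k"
    using i by (simp add: of_nat_diff)
  finally show ?thesis using K by (simp add: field_simps)
qed

lemma resp_nash_share_pos:
  assumes L: "L \<ge> 2" and N: "resp_nash K L s p c" and s: "s \<in> offers K"
    and "1 \<le> K" and i: "i < K" and high: "win_prob L (1 / real K) < s i"
  shows "0 < p i"
proof (rule ccontr)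
  assume "\<not> 0 < p i"
  have p: "p \<in> simplex K" using N by (simp add: resp_nash_def)
  with \<open>\<not> 0 < p i\<close> have "p i = 0" using simplex_nonneg[OF p, of i] by simp
  then have "s i \<le> c" using N i L win_prob_0[of L] by (auto simp: resp_nash_def)
  obtain j where j: "j < K" "1 / real K \<le> p j"
    using simplex_exists_ge_inverse[OF p \<open>1 \<le> K\<close>] by blast
  then have "0 < p j" using \<open>1 \<le> K\<close> by (simp add: less_le_trans[OF _ j(2)])
  then have "c = s j * win_prob L (p j)" using N j by (simp add: resp_nash_def)
  also have "\<dots> \<le> 1 * win_prob L (p j)"
    using s j L simplex_le_1[OF p] win_prob_pos[of L "p j"]
    by (intro mult_right_mono) (auto simp: offers_def)
  also have "\<dots> \<le> win_prob L (1 / real K)"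
    using j simplex_le_1[OF p] \<open>1 \<le> K\<close> by (simp add: win_prob_antimono[OF L])
  finally show False using \<open>s i \<le> c\<close> high by simp
qed

(* Responder behaviour after proposer i adjusts its offer so that the common value c becomes
   rho c: every other proposer j keeps its offer, so its share q_j must satisfy
   W(q_j) = rho W(p_j). *)
definition rescaled_resp :: "nat \<Rightarrow> nat \<Rightarrow> (nat \<Rightarrow> real) \<Rightarrow> nat \<Rightarrow> real \<Rightarrow> nat \<Rightarrow> real" where
  "rescaled_resp K L p i \<rho> k =
    (if k = i then 1 - (\<Sum>j\<in>{..<K} - {i}. win_prob_inv L (\<rho> * win_prob L (p j)))
     else if k < K then win_prob_inv L (\<rho> * win_prob L (p k)) else 0)"

lemma rescaled_resp_1:
  assumes L: "L \<ge> 2" and p: "p \<in> simplex K" and i: "i < K"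
  shows "rescaled_resp K L p i 1 = p"
proof
  fix k
  have inv: "win_prob_inv L (win_prob L (p j)) = p j" for j
    using win_prob_inv_win_prob[OF L] simplex_nonneg[OF p] simplex_le_1[OF p] by simp
  show "rescaled_resp K L p i 1 k = p k"
    using simplex_sum_others[OF p i] p by (auto simp: rescaled_resp_def inv simplex_def)
qed

lemma resp_nash_rescaled:
  assumes L: "L \<ge> 2" and p: "p \<in> simplex K" and i: "i < K"
    and indiff: "\<And>k. k < K \<Longrightarrow> s k * win_prob L (p k) = c"
    and range: "\<And>j. j < K \<Longrightarrow> j \<noteq> i \<Longrightarrow> 1 / real L \<le> \<rho> * win_prob L (p j) \<and> \<rho> * win_prob L (p j) \<le> 1"
    and t: "0 \<le> rescaled_resp K L p i \<rho> i"
  defines "q \<equiv> rescaled_resp K L p i \<rho>"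
  shows "resp_nash K L (s(i := \<rho> * c / win_prob L (q i))) q (\<rho> * c)"
proof -
  have q_other: "0 \<le> q j" "win_prob L (q j) = \<rho> * win_prob L (p j)" if "j < K" "j \<noteq> i" for j
    using win_prob_win_prob_inv[OF L] range[OF that] that by (simp_all add: q_def rescaled_resp_def)
  have "(\<Sum>j\<in>{..<K} - {i}. q j) = 1 - q i"
    by (simp add: q_def rescaled_resp_def)
  then have sum: "(\<Sum>j<K. q j) = 1"
    using sum_diff1[of "{..<K}" q i] i by simp
  have "0 \<le> (\<Sum>j\<in>{..<K} - {i}. q j)" using q_other by (intro sum_nonneg) auto
  then have "q i \<le> 1" using \<open>_ = 1 - q i\<close> by simp
  then have "0 < win_prob L (q i)" using win_prob_pos L by simp
  moreover have "q \<in> simplex K"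
    using sum t q_other i by (auto simp: simplex_def q_def rescaled_resp_def)
  moreover have "s k * win_prob L (q k) = \<rho> * c" if "k < K" "k \<noteq> i" for k
    using q_other(2)[OF that] indiff[OF that(1)] by (simp add: algebra_simps)
  ultimately show ?thesis by (auto simp: resp_nash_def)
qed

lemma DERIV_rescaled_resp:
  assumes L: "L \<ge> 2" and interior: "\<And>j. j < K \<Longrightarrow> j \<noteq> i \<Longrightarrow> 0 < p j \<and> p j < 1"
  shows "DERIV (\<lambda>\<rho>. rescaled_resp K L p i \<rho> i) 1
    :> (\<Sum>j\<in>{..<K} - {i}. win_prob_ratio L (p j))"
proof -
  have "DERIV (\<lambda>\<rho>. win_prob_inv L (\<rho> * win_prob L (p j))) 1
      :> 1 / win_prob_deriv L (p j) * win_prob L (p j)" if "j \<in> {..<K} - {i}" for j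
  proof (rule DERIV_chain2[where f = "win_prob_inv L"])
    show "DERIV (win_prob_inv L) (1 * win_prob L (p j)) :> 1 / win_prob_deriv L (p j)"
      using DERIV_win_prob_inv[OF L] interior that by simp
    show "DERIV (\<lambda>\<rho>. \<rho> * win_prob L (p j)) 1 :> win_prob L (p j)"
      by (rule derivative_eq_intros refl | simp)+
  qed
  then have "DERIV (\<lambda>\<rho>. 1 - (\<Sum>j\<in>{..<K} - {i}. win_prob_inv L (\<rho> * win_prob L (p j)))) 1
      :> 0 - (\<Sum>j\<in>{..<K} - {i}. 1 / win_prob_deriv L (p j) * win_prob L (p j))"
    by (intro DERIV_diff DERIV_const DERIV_sum) auto
  then show ?thesis
    by (simp add: rescaled_resp_def win_prob_ratio_def sum_negf)
qed

lemma eventually_rescaled_resp_admissible: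
  assumes L: "L \<ge> 2" and p: "p \<in> simplex K" and i: "i < K"
    and interior: "\<And>k. k < K \<Longrightarrow> 0 < p k \<and> p k < 1"
    and c: "0 < c" "c < win_prob L (p i)"
  shows "\<forall>\<^sub>F \<rho> in at 1.
    (\<forall>j\<in>{..<K} - {i}. 1 / real L < \<rho> * win_prob L (p j) \<and> \<rho> * win_prob L (p j) < 1)
    \<and> 0 < rescaled_resp K L p i \<rho> i
    \<and> 0 < \<rho> * c / win_prob L (rescaled_resp K L p i \<rho> i)
    \<and> \<rho> * c / win_prob L (rescaled_resp K L p i \<rho> i) < 1"
proof -
  define t where "t \<rho> = rescaled_resp K L p i \<rho> i" for \<rho>
  define x where "x \<rho> = \<rho> * c / win_prob L (t \<rho>)" for \<rho>
  have "isCont t 1"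
    unfolding t_def by (rule DERIV_isCont, rule DERIV_rescaled_resp[OF L]) (use interior in auto)
  moreover have t1: "t 1 = p i" using rescaled_resp_1[OF L p i] by (simp add: t_def)
  ultimately have lim_t: "(t \<longlongrightarrow> p i) (at 1)" by (simp add: isCont_def)
  have Wi: "0 < win_prob L (p i)" using win_prob_pos[of L "p i"] interior[OF i] L by simp
  have "isCont x 1"
    unfolding x_def using Wi t1
    by (intro continuous_intros isCont_o2[OF \<open>isCont t 1\<close> isCont_win_prob]) simp
  then have lim_x: "(x \<longlongrightarrow> c / win_prob L (p i)) (at 1)" by (simp add: isCont_def x_def t1)
  have "\<forall>\<^sub>F \<rho> in at 1. 1 / real L < \<rho> * win_prob L (p j) \<and> \<rho> * win_prob L (p j) < 1"
    if "j \<in> {..<K} - {i}" for j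
  proof -
    have "((\<lambda>\<rho>. \<rho> * win_prob L (p j)) \<longlongrightarrow> win_prob L (p j)) (at 1)"
      by (intro tendsto_eq_intros) auto
    moreover have "0 < p j" "p j < 1" using that interior by auto
    then have "1 / real L < win_prob L (p j)" "win_prob L (p j) < 1"
      using win_prob_greater[OF L] win_prob_less_1[OF L] by auto
    ultimately show ?thesis
      by (intro eventually_conj order_tendstoD)
  qed
  moreover have "0 < c / win_prob L (p i)" "c / win_prob L (p i) < 1"
    using c Wi by (simp_all add: divide_less_eq)
  ultimately have "\<forall>\<^sub>F \<rho> in at 1.
      (\<forall>j\<in>{..<K} - {i}. 1 / real L < \<rho> * win_prob L (p j) \<and> \<rho> * win_prob L (p j) < 1)
      \<and> 0 < t \<rho> \<and> 0 < x \<rho> \<and> x \<rho> < 1"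
    using interior[OF i]
    by (intro eventually_conj eventually_ball_finite order_tendstoD[OF lim_t] order_tendstoD[OF lim_x]) auto
  then show ?thesis unfolding x_def t_def .
qed

lemma prop_payoff_eq:
  fixes K L :: nat and s :: "nat \<Rightarrow> real" and i :: nat
  assumes "L \<ge> 1"
  defines "t \<equiv> resp_strategy K L s i"
  shows "prop_payoff K L s i = 1 - (1 - t) ^ L - real L * t * (s i * win_prob L t)"
proof -
  have closed: "1 - (1 - t) ^ L = real L * t * win_prob L t"
    using win_prob_closed_form[OF assms(1)] by simp
  show ?thesis
    unfolding prop_payoff_def t_def[symmetric] closed by (simp add: algebra_simps)
qed

section \<open>The equilibrium offer\<close>

lemma sstar_eq:
  assumes K: "K \<ge> 2" and L: "L \<ge> 2"
  defines "X \<equiv> (1 - 1 / real K) ^ (L - 1)"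
  shows "sstar K L = real L * (real K - 1) * X / ((real K)\<^sup>2 - X * ((real K - 1) * real K + real L))"
proof -
  define Y where "Y = real K ^ (L - 1)"
  have "Y \<noteq> 0" using K by (simp add: Y_def)
  have pow: "(real K - 1) ^ (L - 1) = X * Y"
    using K by (simp add: X_def Y_def power_divide field_simps)
  have "(real K - 1) ^ L = (real K - 1) * (real K - 1) ^ (L - 1)"
    using power_Suc[of "real K - 1" "L - 1"] L by simp
  then have num: "real L * (real K - 1) ^ L = Y * (real L * (real K - 1) * X)"
    unfolding pow by (simp only: mult_ac)
  have "L + 1 = 2 + (L - 1)" using L by simp
  then have K_pow: "real K ^ (L + 1) = (real K)\<^sup>2 * Y"
    by (simp only: Y_def power_add)
  then have den: "real K ^ (L + 1) - (real K - 1) ^ (L - 1) * ((real K - 1) * real K + real L)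
      = Y * ((real K)\<^sup>2 - X * ((real K - 1) * real K + real L))"
    unfolding pow K_pow by (simp add: algebra_simps)
  show ?thesis
    unfolding sstar_def num den by (rule mult_divide_mult_cancel_left[OF \<open>Y \<noteq> 0\<close>])
qed

lemma Bernoulli_ratio_bound:
  fixes m :: real
  assumes "0 < m"
  shows "(m / (m + 1)) ^ n * (m + real n) \<le> m"
proof -
  define r where "r = m / (m + 1)"
  have "0 < m + m * m" using assms by (simp add: add_pos_pos)
  then have inverse: "r * (1 + 1 / m) = 1"
    using assms by (simp add: r_def field_simps)
  have "0 \<le> 1 / m" using assms by simp
  then have "1 + real n * (1 / m) \<le> (1 + 1 / m) ^ n"
    by (intro Bernoulli_inequality) linarith
  then have "r ^ n * (1 + real n * (1 / m)) \<le> r ^ n * (1 + 1 / m) ^ n"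
    using assms by (intro mult_left_mono) (auto simp: r_def)
  also have "\<dots> = 1"
    by (simp add: inverse flip: power_mult_distrib)
  finally have bound: "r ^ n * (1 + real n * (1 / m)) \<le> 1" .
  have "r ^ n * (m + real n) = m * (r ^ n * (1 + real n * (1 / m)))"
    using assms by (simp add: field_simps)
  also have "\<dots> \<le> m * 1"
    using assms bound by (intro mult_left_mono) auto
  finally have "r ^ n * (m + real n) \<le> m" by simp
  then show ?thesis unfolding r_def .
qed

lemma sstar_bounds:
  assumes K: "K \<ge> 2" and L: "L \<ge> 2"
  shows "0 < sstar K L" "sstar K L < 1"
proof -
  define m where "m = real K - 1"
  define X where "X = (1 - 1 / real K) ^ (L - 1)"
  have m: "m \<ge> 1" using K by (simp add: m_def)
  have "1 - 1 / real K = m / (m + 1)"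
    using K by (simp add: m_def field_simps)
  then have X_eq: "X = (m / (m + 1)) ^ (L - 1)"
    by (simp add: X_def)
  have "X > 0" using m by (simp add: X_eq)
  have "X < 1" using m L by (simp add: X_eq power_less_one_iff)
  have "X * (m + real (L - 1)) \<le> m"
    using Bernoulli_ratio_bound[of m "L - 1"] m by (simp add: X_eq)
  moreover have "X * (real K - 1 + real L) = X * (m + real (L - 1)) + X"
    using L by (simp add: m_def of_nat_diff algebra_simps)
  ultimately have key: "X * (real K - 1 + real L) < real K"
    using \<open>X < 1\<close> by (simp add: m_def)
  define D where "D = (real K)\<^sup>2 - X * ((real K - 1) * real K + real L)"
  have "D - real L * (real K - 1) * X = real K * (real K - X * (real K - 1 + real L))"
    by (simp add: D_def algebra_simps power2_eq_square)
  moreover have "0 < real K * (real K - X * (real K - 1 + real L))"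
    using key K by simp
  ultimately have "real L * (real K - 1) * X < D" by linarith
  moreover have "0 < real L * (real K - 1) * X" using K L \<open>X > 0\<close> by simp
  ultimately show "0 < sstar K L" "sstar K L < 1"
    unfolding sstar_eq[OF K L] X_def[symmetric] D_def[symmetric] by simp_all
qed

lemma sstar_first_order:
  assumes K: "K \<ge> 2" and L: "L \<ge> 2"
  defines "a \<equiv> 1 / real K"
  shows "sstar K L * (win_prob L a - a * win_prob_deriv L a / (real K - 1)) = (1 - a) ^ (L - 1)"
proof -
  define X where "X = (1 - a) ^ (L - 1)"
  define D where "D = (real K)\<^sup>2 - X * ((real K - 1) * real K + real L)"
  have "(1 - a) ^ L = (1 - a) * X"
    using L by (simp add: X_def flip: power_Suc)
  then have closed: "real L * a * win_prob L a = 1 - (1 - a) * X"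
    using win_prob_closed_form[of L a] L by simp
  have "win_prob L a = (real L * a * win_prob L a) * real K / real L"
    using K L by (simp add: a_def field_simps)
  then have W: "win_prob L a = real K * (1 - (1 - a) * X) / real L"
    unfolding closed by simp
  have W': "a * win_prob_deriv L a = X - win_prob L a"
    using win_prob_deriv_eq[of L a] L by (simp add: X_def)
  have "win_prob L a - a * win_prob_deriv L a / (real K - 1) = D / (real L * (real K - 1))"
    using K L unfolding W' W D_def by (simp add: a_def field_simps power2_eq_square)
  moreover have "sstar K L = real L * (real K - 1) * X / D"
    unfolding sstar_eq[OF K L] D_def X_def a_def ..
  moreover have "D \<noteq> 0"
    using sstar_bounds[OF K L] \<open>sstar K L = _\<close> by auto
  ultimately show ?thesis using K L by (simp add: X_def)
qed

(* Bound on the payoff (1 - x) (1 - (1 - t)^L) of a proposer that offers x and attracts share t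
   while the others offer sigma; it combines 1 - (1 - t)^L = L t W(t) with
   x W(t) >= sigma W((1 - t) / (K - 1)). *)
definition dev_payoff :: "nat \<Rightarrow> nat \<Rightarrow> real \<Rightarrow> real \<Rightarrow> real" where
  "dev_payoff K L \<sigma> t = 1 - (1 - t) ^ L - \<sigma> * real L * t * win_prob L ((1 - t) / (real K - 1))"

lemma DERIV_dev_payoff:
  assumes "L \<ge> 1"
  shows "DERIV (dev_payoff K L \<sigma>) t :> real L * (1 - t) ^ (L - 1)
    - \<sigma> * real L * (win_prob L ((1 - t) / (real K - 1))
      - t * win_prob_deriv L ((1 - t) / (real K - 1)) / (real K - 1))"
proof -
  have "DERIV (\<lambda>t. 1 - t) t :> - 1"
    by (rule derivative_eq_intros refl | simp)+
  from DERIV_chain2[OF DERIV_win_prob[OF assms] DERIV_cdivide[OF this, of "real K - 1"]]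
  have "DERIV (\<lambda>t. win_prob L ((1 - t) / (real K - 1))) t
      :> - win_prob_deriv L ((1 - t) / (real K - 1)) / (real K - 1)"
    by simp
  then have "DERIV (dev_payoff K L \<sigma>) t :> 0 - - (real L * (1 - t) ^ (L - 1))
      - (\<sigma> * real L * 1 * win_prob L ((1 - t) / (real K - 1))
        + - win_prob_deriv L ((1 - t) / (real K - 1)) / (real K - 1) * (\<sigma> * real L * t))"
    unfolding dev_payoff_def
    by (intro DERIV_diff DERIV_const DERIV_power_one_minus DERIV_mult DERIV_cmult DERIV_ident)
  then show ?thesis
    by (rule DERIV_cong) (simp add: algebra_simps)
qed

lemma dev_payoff_concave:
  assumes K: "K \<ge> 2" and L: "L \<ge> 2" and "0 \<le> \<sigma>"
  shows "convex_on {0..1} (\<lambda>t. - dev_payoff K L \<sigma> t)"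
proof (rule convex_on_realI)
  define u where "u t = (1 - t) / (real K - 1)" for t
  define f' where "f' t = - (real L * (1 - t) ^ (L - 1))
      + \<sigma> * real L * (win_prob L (u t) - t * win_prob_deriv L (u t) / (real K - 1))" for t
  show "((\<lambda>t. - dev_payoff K L \<sigma> t) has_real_derivative f' t) (at t)" for t
    unfolding f'_def u_def using DERIV_minus[OF DERIV_dev_payoff] L by simp
  show "f' x \<le> f' y" if "x \<in> {0..1}" "y \<in> {0..1}" "x \<le> y" for x y
  proof -
    have u: "0 \<le> u y" "u y \<le> u x" "u x \<le> 1"
      using that K by (auto simp: u_def divide_right_mono divide_le_eq)
    have "real L * (1 - y) ^ (L - 1) \<le> real L * (1 - x) ^ (L - 1)"
      using that by (intro mult_left_mono power_mono) auto
    moreover have "win_prob L (u x) \<le> win_prob L (u y)"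
      using u by (intro win_prob_antimono[OF L]) auto
    moreover have "x * - win_prob_deriv L (u x) \<le> y * - win_prob_deriv L (u y)"
      using that u win_prob_deriv_mono[of "u y" "u x" L] win_prob_deriv_nonpos[of "u x" L]
      by (intro mult_mono) auto
    then have "y * win_prob_deriv L (u y) / (real K - 1) \<le> x * win_prob_deriv L (u x) / (real K - 1)"
      using K by (intro divide_right_mono) auto
    ultimately show ?thesis
      unfolding f'_def using \<open>0 \<le> \<sigma>\<close>
      by (intro add_mono mult_left_mono) auto
  qed
qed simp

lemma dev_payoff_le_sstar:
  assumes K: "K \<ge> 2" and L: "L \<ge> 2" and t: "0 \<le> t" "t \<le> 1"
  shows "dev_payoff K L (sstar K L) t \<le> dev_payoff K L (sstar K L) (1 / real K)"
proof -
  define a where "a = 1 / real K"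
  define Q where "Q = win_prob L a - a * win_prob_deriv L a / (real K - 1)"
  have a: "0 < a" "a < 1" and u: "(1 - a) / (real K - 1) = a"
    using K by (auto simp: a_def field_simps)
  have D: "DERIV (dev_payoff K L (sstar K L)) a :> real L * (1 - a) ^ (L - 1) - sstar K L * real L * Q"
    using DERIV_dev_payoff[of L K "sstar K L" a] L unfolding u Q_def by simp
  have "sstar K L * Q = (1 - a) ^ (L - 1)"
    using sstar_first_order[OF K L] by (simp add: Q_def a_def)
  then have zero: "real L * (1 - a) ^ (L - 1) - sstar K L * real L * Q = 0"
    by (simp add: algebra_simps)
  from D have "DERIV (dev_payoff K L (sstar K L)) a :> 0" unfolding zero .
  from has_field_derivative_at_within[OF DERIV_minus[OF this]]
  have "((\<lambda>t. - dev_payoff K L (sstar K L) t) has_field_derivative 0) (at a within {0..1})"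
    by simp
  from convex_on_imp_above_tangent[OF dev_payoff_concave[OF K L] _ _ _ this] a t
  show ?thesis
    using sstar_bounds[OF K L] by (simp add: a_def)
qed

lemma dev_payoff_uniform:
  assumes "K \<ge> 2" "L \<ge> 1"
  shows "dev_payoff K L \<sigma> (1 / real K) = (1 - \<sigma>) * (1 - (1 - 1 / real K) ^ L)"
proof -
  have "(1 - 1 / real K) / (real K - 1) = 1 / real K"
    using assms by (simp add: field_simps)
  then have "dev_payoff K L \<sigma> (1 / real K)
      = 1 - (1 - 1 / real K) ^ L - \<sigma> * (real L * (1 / real K) * win_prob L (1 / real K))"
    unfolding dev_payoff_def by (simp only: mult.assoc)
  then show ?thesis
    unfolding win_prob_closed_form[OF assms(2)] by (simp add: algebra_simps)
qed

section \<open>Subgame-perfect equilibria\<close>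

locale ess_ultimatum =
  fixes K L :: nat
  assumes two_le_K: "2 \<le> K" and two_le_L: "2 \<le> L"
    and unique_ESS: "\<forall>s \<in> offers K. s \<noteq> (\<lambda>_. 0) \<longrightarrow> (\<exists>!p. ESS K L s p)"
begin

lemma resp_strategy_nash:
  assumes "s \<in> offers K" "s \<noteq> (\<lambda>_. 0)"
  shows "resp_nash K L s (resp_strategy K L s) (resp_payoff K L s (resp_strategy K L s) (resp_strategy K L s))"
proof -
  have "\<exists>!p. ESS K L s p" using unique_ESS assms by blast
  then have "ESS K L s (resp_strategy K L s)"
    unfolding resp_strategy_def by (rule theI')
  then show ?thesis by (rule ESS_imp_resp_nash)
qed

lemma resp_strategy_eqI:
  assumes "s \<in> offers K" "s \<noteq> (\<lambda>_. 0)" "resp_nash K L s q c"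
  shows "resp_strategy K L s = q"
  using resp_nash_unique[OF two_le_L assms(1,2) resp_strategy_nash[OF assms(1,2)] assms(3)] .

lemma deviation_payoff_le:
  assumes i: "i < K" and x: "0 \<le> x" "x \<le> 1" and \<sigma>: "0 < \<sigma>" "\<sigma> \<le> 1"
  defines "s \<equiv> (\<lambda>j. if j < K then \<sigma> else 0)(i := x)"
  shows "\<exists>t\<in>{0..1}. prop_payoff K L s i \<le> dev_payoff K L \<sigma> t"
proof -
  obtain j where j: "j < K" "j \<noteq> i" using exists_other_index[OF two_le_K] by blast
  have others: "\<And>k. k < K \<Longrightarrow> k \<noteq> i \<Longrightarrow> s k = \<sigma>" by (simp add: s_def)
  have "s \<in> offers K" using x \<sigma> i by (auto simp: s_def offers_def)
  moreover have "s \<noteq> (\<lambda>_. 0)" using others[OF j] \<sigma> by auto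
  ultimately obtain c where N: "resp_nash K L s (resp_strategy K L s) c"
    using resp_strategy_nash by blast
  define t where "t = resp_strategy K L s i"
  define u where "u = (1 - t) / (real K - 1)"
  have t: "0 \<le> t" "t \<le> 1"
    using N by (auto simp: resp_nash_def simplex_nonneg simplex_le_1 t_def)
  have "resp_strategy K L s j = u"
    using resp_nash_others_share[OF two_le_K two_le_L N i \<sigma>(1) others j] by (simp add: t_def u_def)
  moreover have "s j * win_prob L (resp_strategy K L s j) \<le> c"
    using N j by (simp add: resp_nash_def)
  ultimately have "\<sigma> * win_prob L u \<le> c" using others[OF j] by simp
  then have "t * (\<sigma> * win_prob L u) \<le> t * c"
    using t by (intro mult_left_mono)
  also have "t * c = t * (x * win_prob L t)"
    using N i t by (cases "t = 0") (auto simp: resp_nash_def s_def t_def)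
  finally have gain: "real L * (t * (\<sigma> * win_prob L u)) \<le> real L * (t * (x * win_prob L t))"
    by (rule mult_left_mono) simp
  have "prop_payoff K L s i = 1 - (1 - t) ^ L - real L * t * (x * win_prob L t)"
    using prop_payoff_eq[of L K s i] two_le_L by (simp add: t_def s_def)
  also have "\<dots> \<le> dev_payoff K L \<sigma> t"
    using gain by (simp add: dev_payoff_def u_def algebra_simps)
  finally show ?thesis using t by auto
qed

lemma resp_strategy_flat:
  assumes "0 < \<sigma>" "\<sigma> \<le> 1"
  shows "resp_strategy K L (\<lambda>i. if i < K then \<sigma> else 0) = (\<lambda>i. if i < K then 1 / real K else 0)"
proof (rule resp_strategy_eqI)
  show "(\<lambda>i. if i < K then \<sigma> else 0) \<in> offers K"
    using assms by (auto simp: offers_def)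
  show "(\<lambda>i. if i < K then \<sigma> else 0) \<noteq> (\<lambda>_. 0)"
  proof
    assume "(\<lambda>i. if i < K then \<sigma> else 0) = (\<lambda>_. 0)"
    from fun_cong[OF this, of 0] show False using assms two_le_K by simp
  qed
  show "resp_nash K L (\<lambda>i. if i < K then \<sigma> else 0) (\<lambda>i. if i < K then 1 / real K else 0)
      (\<sigma> * win_prob L (1 / real K))"
    using two_le_K by (simp add: resp_nash_def simplex_def)
qed

lemma sstar_SPNE: "SPNE K L (\<lambda>i. if i < K then sstar K L else 0)"
proof -
  define s where "s = (\<lambda>i. if i < K then sstar K L else (0::real))"
  have \<sigma>: "0 < sstar K L" "sstar K L \<le> 1"
    using sstar_bounds[OF two_le_K two_le_L] by auto
  have "prop_payoff K L (s(i := x)) i \<le> prop_payoff K L s i"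
    if i: "i < K" and x: "0 \<le> x" "x \<le> 1" for i x
  proof -
    obtain t where t: "0 \<le> t" "t \<le> 1"
      and dev: "prop_payoff K L (s(i := x)) i \<le> dev_payoff K L (sstar K L) t"
      using deviation_payoff_le[OF i x \<sigma>] by (auto simp: s_def)
    have "dev_payoff K L (sstar K L) t \<le> dev_payoff K L (sstar K L) (1 / real K)"
      using dev_payoff_le_sstar[OF two_le_K two_le_L t] .
    also have "\<dots> = prop_payoff K L s i"
      using dev_payoff_uniform[OF two_le_K] two_le_L i resp_strategy_flat[OF \<sigma>]
      by (simp add: prop_payoff_def s_def)
    finally show ?thesis using dev by simp
  qed
  moreover have "s \<in> offers K" using \<sigma> by (simp add: s_def offers_def)
  ultimately show ?thesis unfolding SPNE_def s_def by blast
qed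

lemma SPNE_interior:
  assumes SP: "SPNE K L s" and "s \<noteq> (\<lambda>_. 0)" and i: "i < K"
  shows "0 < resp_strategy K L s i" "s i < 1"
proof -
  have s: "s \<in> offers K" using SP by (simp add: SPNE_def)
  (* an offer above W(1/K) is chosen with positive probability, which secures a positive payoff *)
  define x where "x = (1 + win_prob L (1 / real K)) / 2"
  have "win_prob L (1 / real K) < 1"
    using win_prob_less_1[OF two_le_L] two_le_K by simp
  then have x: "win_prob L (1 / real K) < x" "0 < x" "x < 1"
    using win_prob_pos[of L "1 / real K"] two_le_L two_le_K by (auto simp: x_def)
  have s': "s(i := x) \<in> offers K" "s(i := x) \<noteq> (\<lambda>_. 0)"
    using s i x by (auto simp: offers_def fun_eq_iff)
  then obtain c where N: "resp_nash K L (s(i := x)) (resp_strategy K L (s(i := x))) c"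
    using resp_strategy_nash by blast
  from resp_nash_share_pos[OF two_le_L N s'(1) _ i] two_le_K x
  have pos: "0 < resp_strategy K L (s(i := x)) i" by simp
  have "resp_strategy K L (s(i := x)) \<in> simplex K" using N by (simp add: resp_nash_def)
  then have "resp_strategy K L (s(i := x)) i \<le> 1" by (rule simplex_le_1)
  then have "(1 - resp_strategy K L (s(i := x)) i) ^ L < 1"
    using pos two_le_L by (simp add: power_less_one_iff)
  then have "0 < prop_payoff K L (s(i := x)) i"
    using x by (simp add: prop_payoff_def)
  also have "\<dots> \<le> prop_payoff K L s i"
    using SP i x by (simp add: SPNE_def)
  finally have "0 < (1 - s i) * (1 - (1 - resp_strategy K L s i) ^ L)"
    by (simp add: prop_payoff_def)
  moreover have "s i \<le> 1" "0 \<le> resp_strategy K L s i"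
    using s i resp_strategy_nash[OF s \<open>s \<noteq> _\<close>]
    by (auto simp: offers_def resp_nash_def simplex_nonneg)
  ultimately show "0 < resp_strategy K L s i" "s i < 1"
    by (auto simp: order_le_less zero_less_mult_iff)
qed

lemma SPNE_interior_nash:
  fixes s :: "nat \<Rightarrow> real"
  assumes SP: "SPNE K L s" and "s \<noteq> (\<lambda>_. 0)"
  defines "p \<equiv> resp_strategy K L s"
  obtains c where "0 < c" "\<And>k. k < K \<Longrightarrow> 0 < p k \<and> p k < 1 \<and> s k < 1 \<and> s k * win_prob L (p k) = c"
proof -
  have s: "s \<in> offers K" using SP by (simp add: SPNE_def)
  define c where "c = resp_payoff K L s p p"
  have N: "resp_nash K L s p c"
    unfolding p_def c_def by (rule resp_strategy_nash[OF s \<open>s \<noteq> _\<close>])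
  have pos: "0 < p k" "s k < 1" if "k < K" for k
    using SPNE_interior[OF SP \<open>s \<noteq> _\<close> that] by (simp_all add: p_def)
  have "p k < 1" if k: "k < K" for k
  proof -
    obtain j where j: "j < K" "j \<noteq> k" using exists_other_index[OF two_le_K] by blast
    have "p \<in> simplex K" using N by (simp add: resp_nash_def)
    then have "p j \<le> 1 - p k"
      using simplex_sum_others[of p K k] k j simplex_nonneg
      by (metis DiffI finite_Diff finite_lessThan lessThan_iff member_le_sum singletonD)
    then show ?thesis using pos(1)[OF j(1)] by simp
  qed
  moreover have "s k * win_prob L (p k) = c" if "k < K" for k
    using N pos that by (simp add: resp_nash_def)
  moreover have "0 < c" using resp_nash_value_pos[OF _ s \<open>s \<noteq> _\<close> N] two_le_L by simp
  ultimately show ?thesis using that pos by blast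
qed

lemma SPNE_rescaled_deviation:
  fixes s :: "nat \<Rightarrow> real" and c \<rho> :: real and i :: nat
  defines "p \<equiv> resp_strategy K L s"
  defines "t \<equiv> rescaled_resp K L p i \<rho> i"
  assumes SP: "SPNE K L s" "s \<noteq> (\<lambda>_. 0)" and i: "i < K"
    and interior: "\<And>k. k < K \<Longrightarrow> 0 < p k \<and> p k < 1 \<and> s k < 1 \<and> s k * win_prob L (p k) = c"
    and range: "\<forall>j\<in>{..<K} - {i}. 1 / real L < \<rho> * win_prob L (p j) \<and> \<rho> * win_prob L (p j) < 1"
    and t: "0 < t" and x: "0 < \<rho> * c / win_prob L t" "\<rho> * c / win_prob L t < 1"
  shows "1 - (1 - t) ^ L - real L * c * (\<rho> * t) \<le> 1 - (1 - p i) ^ L - real L * c * p i"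
proof -
  define x where "x = \<rho> * c / win_prob L t"
  have s: "s \<in> offers K" using SP by (simp add: SPNE_def)
  have p: "p \<in> simplex K"
    using resp_strategy_nash[OF s SP(2)] by (simp add: resp_nash_def p_def)
  have "1 / real L \<le> \<rho> * win_prob L (p j) \<and> \<rho> * win_prob L (p j) \<le> 1"
    if "j < K" "j \<noteq> i" for j
    using bspec[OF range, of j] that by simp
  then have N: "resp_nash K L (s(i := x)) (rescaled_resp K L p i \<rho>) (\<rho> * c)"
    using resp_nash_rescaled[OF two_le_L p i] interior t by (simp add: x_def t_def)
  have s': "s(i := x) \<in> offers K" "s(i := x) \<noteq> (\<lambda>_. 0)"
    using s i x by (auto simp: offers_def fun_eq_iff x_def)
  have "t \<le> 1"
    using simplex_le_1[of "rescaled_resp K L p i \<rho>" K i] N by (simp add: resp_nash_def t_def)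
  then have "x * win_prob L t = \<rho> * c"
    using win_prob_pos[of L t] two_le_L by (simp add: x_def)
  moreover have "resp_strategy K L (s(i := x)) = rescaled_resp K L p i \<rho>"
    by (rule resp_strategy_eqI[OF s' N])
  ultimately have "1 - (1 - t) ^ L - real L * c * (\<rho> * t) = prop_payoff K L (s(i := x)) i"
    using prop_payoff_eq[of L K "s(i := x)" i] two_le_L by (simp add: t_def)
  also have "\<dots> \<le> prop_payoff K L s i"
    using SP i x by (simp add: SPNE_def x_def)
  also have "\<dots> = 1 - (1 - p i) ^ L - real L * c * p i"
    using prop_payoff_eq[of L K s i] two_le_L interior[OF i] by (simp add: p_def)
  finally show ?thesis .
qed

lemma SPNE_first_order:
  fixes s :: "nat \<Rightarrow> real" and c :: real
  defines "p \<equiv> resp_strategy K L s"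
  assumes SP: "SPNE K L s" "s \<noteq> (\<lambda>_. 0)" and i: "i < K" and "0 < c"
    and interior: "\<And>k. k < K \<Longrightarrow> 0 < p k \<and> p k < 1 \<and> s k < 1 \<and> s k * win_prob L (p k) = c"
  shows "((1 - p i) ^ (L - 1) - c) * (\<Sum>j\<in>{..<K} - {i}. win_prob_ratio L (p j)) = c * p i"
proof -
  define t where "t \<rho> = rescaled_resp K L p i \<rho> i" for \<rho>
  define B where "B = (\<Sum>j\<in>{..<K} - {i}. win_prob_ratio L (p j))"
  define \<Phi> where "\<Phi> \<rho> = 1 - (1 - t \<rho>) ^ L - real L * c * (\<rho> * t \<rho>)" for \<rho>
  have p: "p \<in> simplex K"
    using resp_strategy_nash SP by (simp add: SPNE_def resp_nash_def p_def)
  have t1: "t 1 = p i" using rescaled_resp_1[OF two_le_L p i] by (simp add: t_def)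
  have dt: "DERIV t 1 :> B"
    unfolding t_def B_def by (rule DERIV_rescaled_resp[OF two_le_L]) (use interior in auto)
  have "DERIV \<Phi> 1 :> 0 - - (real L * (1 - t 1) ^ (L - 1)) * B - real L * c * (1 * t 1 + B * 1)"
    unfolding \<Phi>_def
    by (intro DERIV_diff DERIV_const DERIV_cmult DERIV_mult DERIV_ident dt
        DERIV_chain2[OF DERIV_power_one_minus dt])
  moreover have "0 < win_prob L (p i)" using win_prob_pos[of L "p i"] interior[OF i] two_le_L by simp
  then have "s i * win_prob L (p i) < 1 * win_prob L (p i)"
    using interior[OF i] by (intro mult_strict_right_mono) auto
  then have "c < win_prob L (p i)" using interior[OF i] by simp
  with eventually_rescaled_resp_admissible[OF two_le_L p i _ \<open>0 < c\<close>] interior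
  have "\<forall>\<^sub>F \<rho> in at 1.
      (\<forall>j\<in>{..<K} - {i}. 1 / real L < \<rho> * win_prob L (p j) \<and> \<rho> * win_prob L (p j) < 1)
      \<and> 0 < t \<rho> \<and> 0 < \<rho> * c / win_prob L (t \<rho>) \<and> \<rho> * c / win_prob L (t \<rho>) < 1"
    unfolding t_def by blast
  then have "\<forall>\<^sub>F \<rho> in at 1. \<Phi> \<rho> \<le> \<Phi> 1"
    by (rule eventually_mono)
       (use SPNE_rescaled_deviation[OF SP i interior[unfolded p_def], folded p_def] in
        \<open>auto simp: \<Phi>_def t_def t1[unfolded t_def]\<close>)
  then obtain d where "0 < d" and d: "\<And>\<rho>. \<rho> \<noteq> 1 \<Longrightarrow> dist \<rho> 1 < d \<Longrightarrow> \<Phi> \<rho> \<le> \<Phi> 1"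
    unfolding eventually_at by auto
  then have "\<forall>\<rho>. \<bar>1 - \<rho>\<bar> < d \<longrightarrow> \<Phi> \<rho> \<le> \<Phi> 1"
    by (metis dist_real_def abs_minus_commute order_refl)
  ultimately have "0 - - (real L * (1 - t 1) ^ (L - 1)) * B - real L * c * (1 * t 1 + B * 1) = 0"
    by (rule DERIV_local_max[OF _ \<open>0 < d\<close>])
  then have "real L * (((1 - p i) ^ (L - 1) - c) * B - c * p i) = 0"
    by (simp add: t1 algebra_simps)
  then show ?thesis using two_le_L by (simp add: B_def)
qed

lemma SPNE_first_order_solved:
  fixes s :: "nat \<Rightarrow> real" and c :: real
  defines "p \<equiv> resp_strategy K L s"
  assumes SP: "SPNE K L s" "s \<noteq> (\<lambda>_. 0)" and i: "i < K" and "0 < c"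
    and interior: "\<And>k. k < K \<Longrightarrow> 0 < p k \<and> p k < 1 \<and> s k < 1 \<and> s k * win_prob L (p k) = c"
  shows "0 < (\<Sum>j\<in>{..<K} - {i}. win_prob_ratio L (p j))"
    and "(1 - p i) ^ (L - 1) - c = c * p i / (\<Sum>j\<in>{..<K} - {i}. win_prob_ratio L (p j))"
proof -
  obtain j where "j < K" "j \<noteq> i" using exists_other_index[OF two_le_K] by blast
  then show pos: "0 < (\<Sum>j\<in>{..<K} - {i}. win_prob_ratio L (p j))"
    using interior by (intro sum_pos2[of _ j]) (auto intro: less_imp_le win_prob_ratio_pos[OF two_le_L])
  show "(1 - p i) ^ (L - 1) - c = c * p i / (\<Sum>j\<in>{..<K} - {i}. win_prob_ratio L (p j))"
    using SPNE_first_order[OF SP i \<open>0 < c\<close> interior[unfolded p_def]] pos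
    by (simp add: field_simps p_def)
qed

lemma SPNE_equal_shares:
  assumes SP: "SPNE K L s" "s \<noteq> (\<lambda>_. 0)" and i: "i < K" and k: "k < K"
  shows "resp_strategy K L s k \<le> resp_strategy K L s i"
proof (rule ccontr)
  define p where "p = resp_strategy K L s"
  obtain c where "0 < c"
    and interior: "\<And>k. k < K \<Longrightarrow> 0 < p k \<and> p k < 1 \<and> s k < 1 \<and> s k * win_prob L (p k) = c"
    using SPNE_interior_nash[OF SP] unfolding p_def by blast
  define b where "b j = win_prob_ratio L (p j)" for j
  define B where "B = (\<Sum>j<K. b j)"
  have "(\<Sum>l\<in>{..<K} - {j}. b l) = B - b j" if "j < K" for j
    using sum_diff1[of "{..<K}" b j] that by (simp add: B_def)
  then have foc: "(1 - p j) ^ (L - 1) - c = c * p j / (B - b j)" "0 < B - b j" if "j < K" for j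
    using SPNE_first_order_solved[OF SP that \<open>0 < c\<close> interior[unfolded p_def], folded p_def] that
    by (simp_all add: b_def)
  assume "\<not> p k \<le> p i"
  then have less: "p i < p k" and "i \<noteq> k" by auto
  have "(1 - p k) ^ (L - 1) < (1 - p i) ^ (L - 1)"
    using less interior[OF i] interior[OF k] two_le_L by (intro power_strict_mono) auto
  then have "c * p k / (B - b k) < c * p i / (B - b i)"
    using foc[OF k] foc[OF i] by simp
  then have "c * (p k * (B - b i)) < c * (p i * (B - b k))"
    using foc(2)[OF i] foc(2)[OF k] by (simp add: field_simps)
  then have "p k * (B - b i) < p i * (B - b k)"
    using \<open>0 < c\<close> by (simp only: mult_less_cancel_left_pos)
  then have "p k * B - p k * b i < p i * B - p i * b k"
    by (simp add: algebra_simps)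
  moreover have "b i + b k \<le> B"
    unfolding B_def using i k \<open>i \<noteq> k\<close> interior
    by (intro sum_two_le) (auto intro: less_imp_le win_prob_ratio_pos[OF two_le_L] simp: b_def)
  then have "0 \<le> (p k - p i) * (B - b i - b k)" using less by simp
  then have "0 \<le> p k * B - p k * b i - p k * b k - p i * B + p i * b i + p i * b k"
    by (simp add: algebra_simps)
  moreover have "p i * b i \<le> p k * b k"
    unfolding b_def using win_prob_ratio_mono[OF two_le_L] less interior[OF i] interior[OF k]
    by simp
  ultimately show False by linarith
qed

lemma SPNE_uniform_shares:
  assumes SP: "SPNE K L s" "s \<noteq> (\<lambda>_. 0)" and k: "k < K"
  shows "resp_strategy K L s k = 1 / real K"
proof -
  define p where "p = resp_strategy K L s"
  have p: "p \<in> simplex K"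
    using resp_strategy_nash SP by (simp add: SPNE_def resp_nash_def p_def)
  have "(\<Sum>j<K. p j) = (\<Sum>j<K. p k)"
    by (rule sum.cong[OF refl], rule order_antisym)
       (use SPNE_equal_shares[OF SP] k in \<open>auto simp: p_def\<close>)
  then have "real K * p k = 1"
    using simplex_sum[OF p] by simp
  then show ?thesis using k by (simp add: p_def field_simps)
qed

lemma SPNE_value:
  fixes s :: "nat \<Rightarrow> real" and c :: real
  defines "p \<equiv> resp_strategy K L s"
  assumes SP: "SPNE K L s" "s \<noteq> (\<lambda>_. 0)" and "0 < c"
    and interior: "\<And>k. k < K \<Longrightarrow> 0 < p k \<and> p k < 1 \<and> s k < 1 \<and> s k * win_prob L (p k) = c"
  shows "c = sstar K L * win_prob L (1 / real K)"
proof -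
  define a where "a = 1 / real K"
  define W where "W = win_prob L a"
  define W' where "W' = win_prob_deriv L a"
  define Q where "Q = W - a * W' / (real K - 1)"
  have "0 < K" using two_le_K by simp
  have pa: "p k = a" if "k < K" for k
    using SPNE_uniform_shares[OF SP that] by (simp add: p_def a_def)
  have a: "0 < a" "a < 1" using two_le_K by (auto simp: a_def)
  have "0 < W" "W' < 0"
    using win_prob_pos[of L a] win_prob_deriv_neg[OF two_le_L, of a] a two_le_L
    by (simp_all add: W_def W'_def)
  have "(\<Sum>j\<in>{..<K} - {0}. win_prob_ratio L (p j)) = (real K - 1) * - (W / W')"
    using pa \<open>0 < K\<close> by (simp add: W_def W'_def win_prob_ratio_def of_nat_diff)
  then have "((1 - a) ^ (L - 1) - c) * ((real K - 1) * - (W / W')) = c * a"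
    using SPNE_first_order[OF SP \<open>0 < K\<close> \<open>0 < c\<close> interior[unfolded p_def]] pa[OF \<open>0 < K\<close>]
    by (simp add: p_def)
  then have "(1 - a) ^ (L - 1) * W = c * Q"
    using \<open>W' < 0\<close> two_le_K by (simp add: Q_def field_simps)
  moreover have "(1 - a) ^ (L - 1) = sstar K L * Q"
    using sstar_first_order[OF two_le_K two_le_L] by (simp add: Q_def W_def W'_def a_def)
  ultimately have "c * Q = (sstar K L * W) * Q" by (auto simp: ac_simps)
  moreover have "a * W' / (real K - 1) < 0"
    using \<open>W' < 0\<close> a two_le_K by (simp add: divide_neg_pos mult_pos_neg)
  then have "0 < Q" using \<open>0 < W\<close> by (simp add: Q_def)
  ultimately show ?thesis by (simp add: W_def a_def)
qed

lemma SPNE_eq_sstar: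
  assumes SP: "SPNE K L s" "s \<noteq> (\<lambda>_. 0)"
  shows "s = (\<lambda>i. if i < K then sstar K L else 0)"
proof
  fix i
  define p where "p = resp_strategy K L s"
  obtain c where "0 < c"
    and interior: "\<And>k. k < K \<Longrightarrow> 0 < p k \<and> p k < 1 \<and> s k < 1 \<and> s k * win_prob L (p k) = c"
    using SPNE_interior_nash[OF SP] unfolding p_def by blast
  show "s i = (if i < K then sstar K L else 0)"
  proof (cases "i < K")
    case True
    have "0 < win_prob L (1 / real K)" using win_prob_pos[of L] two_le_L two_le_K by simp
    moreover have "s i * win_prob L (1 / real K) = sstar K L * win_prob L (1 / real K)"
      using interior[OF True] SPNE_uniform_shares[OF SP True]
        SPNE_value[OF SP \<open>0 < c\<close> interior[unfolded p_def]]
      by (simp add: p_def)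
    ultimately show ?thesis using True by simp
  next
    case False
    with SP show ?thesis by (simp add: SPNE_def offers_def)
  qed
qed

end

theorem mainTheorem4:
  fixes K L :: nat
  assumes "K \<ge> 2" and "L \<ge> 2"
    and "\<forall>s \<in> offers K. s \<noteq> (\<lambda>_. 0) \<longrightarrow> (\<exists>!p. ESS K L s p)"
  shows "SPNE K L (\<lambda>i. if i < K then sstar K L else 0)
    \<and> (\<forall>s. SPNE K L s \<and> s \<noteq> (\<lambda>_. 0) \<longrightarrow> s = (\<lambda>i. if i < K then sstar K L else 0))
    \<and> resp_strategy K L (\<lambda>i. if i < K then sstar K L else 0) = (\<lambda>i. if i < K then 1 / real K else 0)"
proof -
  interpret ess_ultimatum K L
    using assms by unfold_locales auto
  have "0 < sstar K L" "sstar K L \<le> 1"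
    using sstar_bounds[OF assms(1,2)] by auto
  then show ?thesis
    using sstar_SPNE SPNE_eq_sstar resp_strategy_flat by blast
qed

end
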